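(* Let $p\ge2$ and consider the dynamic panel logit AR($p$) model with $T=3$: binary outcomes $Y_{1-p},\dots,Y_0,Y_1,Y_2,Y_3\in\{0,1\}$, regressors $X=(X_1,X_2,X_3)\in\mathbb{R}^{K\times3}$, fixed effect $A\in\mathbb{R}$, with, for $t\in\{1,2,3\}$, $$\Pr(Y_t=1\mid Y_{1-p},\dots,Y_{t-1},X,A)=\frac{\exp(X_t'\beta_0+\sum_{\ell=1}^pY_{t-\ell}\gamma_{0,\ell}+A)}{1+\exp(X_t'\beta_0+\sum_{\ell=1}^pY_{t-\ell}\gamma_{0,\ell}+A)}$$ and true parameters $\beta_0\in\mathbb{R}^K$, $\gamma_0\in\mathbb{R}^p$. Let $Y^{(0)}=(Y_{1-p},\dots,Y_0)$, let $0_r$ and $1_r$ denote the $r$-vectors of zeros and ones, and let $x_{ts}=x_t-x_s$. For $y=(y_1,y_2,y_3)$ define $$m_{(0_p)}=\begin{cases}e^{x_{12}'\beta}&y=(0,1,0),\\ e^{x_{12}'\beta-\gamma_1}&y=(0,1,1),\\ -1&(y_1,y_2)=(1,0),\\0&\text{otherwise},\end{cases}\qquad m_{(0,1_{p-1})}=\begin{cases}-1&(y_1,y_2)=(0,1),\\ e^{x_{21}'\beta-\gamma_1+\gamma_p}&y=(1,0,0),\\ e^{x_{21}'\beta+\gamma_p}&y=(1,0,1),\\0&\text{otherwise},\end{cases}$$ $$m_{(1,0_{p-1})}=\begin{cases}e^{x_{12}'\beta+\gamma_p}&y=(0,1,0),\\ e^{x_{12}'\beta-\gamma_1+\gamma_p}&y=(0,1,1),\\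 -1&(y_1,y_2)=(1,0),\\0&\text{otherwise},\end{cases}\qquad m_{(1_p)}=\begin{cases}-1&(y_1,y_2)=(0,1),\\ e^{x_{21}'\beta-\gamma_1}&y=(1,0,0),\\ e^{x_{21}'\beta}&y=(1,0,1),\\0&\text{otherwise},\end{cases}$$ as functions of $(y,x,\beta,\gamma)$. Then for all $y^{(0)}\in\{0_p,(0,1_{p-1}),(1,0_{p-1}),1_p\}$, $(x_1,x_2)\in\mathbb{R}^{K\times2}$ and $\alpha\in\mathbb{R}$, $$\mathbb{E}\big[m_{y^{(0)}}(Y,X,\beta_0,\gamma_0)\mid Y^{(0)}=y^{(0)},X=(x_1,x_2,x_2),A=\alpha\big]=0,$$ where $Y=(Y_1,Y_2,Y_3)$.
   Context: The joint distribution of $(Y^{(0)},X,A)$ is unrestricted; only the conditional law of $(Y_1,Y_2,Y_3)$ given $(Y^{(0)},X,A)$ is specified by the model. The vector $(0,1_{p-1})$ has first entry (corresponding to $Y_{1-p}$) equal to $0$ and all others equal to $1$; similarly for $(1,0_{p-1})$. *)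

theory Defs
  imports "HOL-Analysis.Analysis"
begin

definition Lam :: "real \<Rightarrow> real" where
  "Lam z = exp z / (1 + exp z)"

text \<open>Full outcome path indexed by time (int): times 1-p..0 from the initial
  history y0, times 1,2,3 from y1,y2,y3 (outcome values are 0 or 1 as reals).\<close>
definition path :: "(int \<Rightarrow> real) \<Rightarrow> real \<Rightarrow> real \<Rightarrow> real \<Rightarrow> int \<Rightarrow> real" where
  "path y0 y1 y2 y3 t = (if t \<le> 0 then y0 t else if t = 1 then y1 else if t = 2 then y2 else y3)"

definition idx :: "nat \<Rightarrow> real^'k \<Rightarrow> (nat \<Rightarrow> real) \<Rightarrow> real \<Rightarrow> (int \<Rightarrow> real) \<Rightarrow> real^'k \<Rightarrow> int \<Rightarrow> real" where
  "idx p \<beta> \<gamma> \<alpha> Y xt t = xt \<bullet> \<beta> + (\<Sum>l=1..p. Y (t - int l) * \<gamma> l) + \<alpha>"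

definition bern :: "real \<Rightarrow> real \<Rightarrow> real" where
  "bern q yt = yt * q + (1 - yt) * (1 - q)"

definition condprob :: "nat \<Rightarrow> real^'k \<Rightarrow> (nat \<Rightarrow> real) \<Rightarrow> (int \<Rightarrow> real)
    \<Rightarrow> real^'k \<Rightarrow> real^'k \<Rightarrow> real^'k \<Rightarrow> real \<Rightarrow> real \<Rightarrow> real \<Rightarrow> real \<Rightarrow> real" where
  "condprob p \<beta> \<gamma> y0 x1 x2 x3 \<alpha> y1 y2 y3 =
     (let Y = path y0 y1 y2 y3 in
      bern (Lam (idx p \<beta> \<gamma> \<alpha> Y x1 1)) y1 *
      bern (Lam (idx p \<beta> \<gamma> \<alpha> Y x2 2)) y2 *
      bern (Lam (idx p \<beta> \<gamma> \<alpha> Y x3 3)) y3)"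

definition condexp :: "nat \<Rightarrow> real^'k \<Rightarrow> (nat \<Rightarrow> real) \<Rightarrow> (int \<Rightarrow> real)
    \<Rightarrow> real^'k \<Rightarrow> real^'k \<Rightarrow> real^'k \<Rightarrow> real \<Rightarrow> (real \<Rightarrow> real \<Rightarrow> real \<Rightarrow> real) \<Rightarrow> real" where
  "condexp p \<beta> \<gamma> y0 x1 x2 x3 \<alpha> m =
     (\<Sum>y1\<in>{0,1}. \<Sum>y2\<in>{0,1}. \<Sum>y3\<in>{0,1}.
        m y1 y2 y3 * condprob p \<beta> \<gamma> y0 x1 x2 x3 \<alpha> y1 y2 y3)"

text \<open>Initial conditions (Y_{1-p},...,Y_0), indexed by time t in {1-p..0}.\<close>
definition y0_0p :: "nat \<Rightarrow> int \<Rightarrow> real" where "y0_0p p t = 0"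
definition y0_01 :: "nat \<Rightarrow> int \<Rightarrow> real" where "y0_01 p t = (if t = 1 - int p then 0 else 1)"
definition y0_10 :: "nat \<Rightarrow> int \<Rightarrow> real" where "y0_10 p t = (if t = 1 - int p then 1 else 0)"
definition y0_1p :: "nat \<Rightarrow> int \<Rightarrow> real" where "y0_1p p t = 1"

definition m_0p :: "nat \<Rightarrow> real^'k \<Rightarrow> real^'k \<Rightarrow> real^'k \<Rightarrow> (nat \<Rightarrow> real) \<Rightarrow> real \<Rightarrow> real \<Rightarrow> real \<Rightarrow> real" where
  "m_0p p x1 x2 \<beta> \<gamma> y1 y2 y3 =
    (if (y1, y2, y3) = (0, 1, 0) then exp ((x1 - x2) \<bullet> \<beta>)
     else if (y1, y2, y3) = (0, 1, 1) then exp ((x1 - x2) \<bullet> \<beta> - \<gamma> 1)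
     else if (y1, y2) = (1, 0) then -1 else 0)"

definition m_01 :: "nat \<Rightarrow> real^'k \<Rightarrow> real^'k \<Rightarrow> real^'k \<Rightarrow> (nat \<Rightarrow> real) \<Rightarrow> real \<Rightarrow> real \<Rightarrow> real \<Rightarrow> real" where
  "m_01 p x1 x2 \<beta> \<gamma> y1 y2 y3 =
    (if (y1, y2) = (0, 1) then -1
     else if (y1, y2, y3) = (1, 0, 0) then exp ((x2 - x1) \<bullet> \<beta> - \<gamma> 1 + \<gamma> p)
     else if (y1, y2, y3) = (1, 0, 1) then exp ((x2 - x1) \<bullet> \<beta> + \<gamma> p)
     else 0)"

definition m_10 :: "nat \<Rightarrow> real^'k \<Rightarrow> real^'k \<Rightarrow> real^'k \<Rightarrow> (nat \<Rightarrow> real) \<Rightarrow> real \<Rightarrow> real \<Rightarrow> real \<Rightarrow> real" where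
  "m_10 p x1 x2 \<beta> \<gamma> y1 y2 y3 =
    (if (y1, y2, y3) = (0, 1, 0) then exp ((x1 - x2) \<bullet> \<beta> + \<gamma> p)
     else if (y1, y2, y3) = (0, 1, 1) then exp ((x1 - x2) \<bullet> \<beta> - \<gamma> 1 + \<gamma> p)
     else if (y1, y2) = (1, 0) then -1 else 0)"

definition m_1p :: "nat \<Rightarrow> real^'k \<Rightarrow> real^'k \<Rightarrow> real^'k \<Rightarrow> (nat \<Rightarrow> real) \<Rightarrow> real \<Rightarrow> real \<Rightarrow> real \<Rightarrow> real" where
  "m_1p p x1 x2 \<beta> \<gamma> y1 y2 y3 =
    (if (y1, y2) = (0, 1) then -1
     else if (y1, y2, y3) = (1, 0, 0) then exp ((x2 - x1) \<bullet> \<beta> - \<gamma> 1)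
     else if (y1, y2, y3) = (1, 0, 1) then exp ((x2 - x1) \<bullet> \<beta>)
     else 0)"

end

theory Submission
  imports Defs
begin

(* With x3 = x2, the period-3 index after (y1, y2) = (0, 1) equals the period-2 index
   after y1 = 1 as soon as the initial condition contributes the same amount to periods 2
   and 3; symmetrically, the period-3 index after (1, 0) equals the period-2 index after
   y1 = 0 when the contributions differ by exactly gamma_2.  The logistic odds identity
   exp (u - v) (1 - Lam u) Lam v = Lam u (1 - Lam v) then turns the exp-weighted
   probabilities of the paths through one switch (0, 1) or (1, 0) into the probability of
   the opposite switch, so the moment has mean zero; alpha cancels since only differences
   of indices enter the weights.  The four initial conditions of the theorem satisfy the
   required coincidence. *)

lemma exp_diff_mult_logit_odds: "exp (u - v) * ((1 - Lam u) * Lam v) = Lam u * (1 - Lam v)"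
proof -
  have "1 + exp z \<noteq> 0" for z :: real
    by (metis add_pos_pos exp_gt_zero less_irrefl zero_less_one)
  then show ?thesis
    unfolding Lam_def by (simp add: exp_diff field_simps)
qed

lemma logit_odds_balance_01:
  "exp (u - v) * ((1 - Lam u) * Lam v * (1 - Lam w)) + exp (u - w) * ((1 - Lam u) * Lam v * Lam w)
     = Lam u * (1 - Lam w)"
proof -
  have "exp (u - v) * ((1 - Lam u) * Lam v * (1 - Lam w)) + exp (u - w) * ((1 - Lam u) * Lam v * Lam w)
      = exp (u - v) * ((1 - Lam u) * Lam v) * (1 - Lam w) + exp (u - w) * ((1 - Lam u) * Lam w) * Lam v"
    by (simp add: algebra_simps)
  also have "\<dots> = Lam u * (1 - Lam v) * (1 - Lam w) + Lam u * (1 - Lam w) * Lam v"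
    by (simp only: exp_diff_mult_logit_odds)
  also have "\<dots> = Lam u * (1 - Lam w)"
    by (simp add: algebra_simps)
  finally show ?thesis .
qed

lemma logit_odds_balance_10:
  "exp (v - u) * (Lam u * (1 - Lam w) * (1 - Lam v)) + exp (w - u) * (Lam u * (1 - Lam w) * Lam v)
     = (1 - Lam u) * Lam v"
proof -
  have "exp (v - u) * (Lam u * (1 - Lam w) * (1 - Lam v)) + exp (w - u) * (Lam u * (1 - Lam w) * Lam v)
      = exp (v - u) * ((1 - Lam v) * Lam u) * (1 - Lam w) + exp (w - u) * ((1 - Lam w) * Lam u) * Lam v"
    by (simp add: algebra_simps)
  also have "\<dots> = Lam v * (1 - Lam u) * (1 - Lam w) + Lam w * (1 - Lam u) * Lam v"
    by (simp only: exp_diff_mult_logit_odds)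
  also have "\<dots> = (1 - Lam u) * Lam v"
    by (simp add: algebra_simps)
  finally show ?thesis .
qed

lemma bern_sum: "bern q 0 + bern q 1 = 1"
  by (simp add: bern_def)

(* The lags l >= t of the period-t index, which reach back into the initial condition. *)
definition init_effect :: "nat \<Rightarrow> (nat \<Rightarrow> real) \<Rightarrow> (int \<Rightarrow> real) \<Rightarrow> nat \<Rightarrow> real" where
  "init_effect p \<gamma> y0 t = (\<Sum>l=t..p. y0 (int t - int l) * \<gamma> l)"

lemma idx_path:
  assumes "1 \<le> t" "t \<le> Suc p"
  shows "idx p \<beta> \<gamma> \<alpha> (path y0 y1 y2 y3) x (int t)
       = x \<bullet> \<beta> + (\<Sum>l=1..<t. path y0 y1 y2 y3 (int t - int l) * \<gamma> l) + init_effect p \<gamma> y0 t + \<alpha>"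
proof -
  have "{1..p} = {1..<t} \<union> {t..p}" using assms by auto
  then have "(\<Sum>l=1..p. path y0 y1 y2 y3 (int t - int l) * \<gamma> l)
      = (\<Sum>l=1..<t. path y0 y1 y2 y3 (int t - int l) * \<gamma> l) + (\<Sum>l=t..p. path y0 y1 y2 y3 (int t - int l) * \<gamma> l)"
    by (simp add: sum.union_disjoint ivl_disj_int)
  moreover have "(\<Sum>l=t..p. path y0 y1 y2 y3 (int t - int l) * \<gamma> l) = init_effect p \<gamma> y0 t"
    unfolding init_effect_def path_def by (rule sum.cong) auto
  ultimately show ?thesis by (simp add: idx_def)
qed

lemma condprob_eq:
  assumes "p \<ge> 2"
  shows "condprob p \<beta> \<gamma> y0 x1 x2 x3 \<alpha> y1 y2 y3
       = bern (Lam (x1 \<bullet> \<beta> + init_effect p \<gamma> y0 1 + \<alpha>)) y1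
       * bern (Lam (x2 \<bullet> \<beta> + y1 * \<gamma> 1 + init_effect p \<gamma> y0 2 + \<alpha>)) y2
       * bern (Lam (x3 \<bullet> \<beta> + y2 * \<gamma> 1 + y1 * \<gamma> 2 + init_effect p \<gamma> y0 3 + \<alpha>)) y3"
proof -
  let ?Y = "path y0 y1 y2 y3"
  have "idx p \<beta> \<gamma> \<alpha> ?Y x1 1 = x1 \<bullet> \<beta> + init_effect p \<gamma> y0 1 + \<alpha>"
    using idx_path[of 1 p] by simp
  moreover have "{1..<2::nat} = {1}" by auto
  then have "idx p \<beta> \<gamma> \<alpha> ?Y x2 2 = x2 \<bullet> \<beta> + y1 * \<gamma> 1 + init_effect p \<gamma> y0 2 + \<alpha>"
    using idx_path[of 2 p] assms by (simp add: path_def)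
  moreover have "{1..<3::nat} = {1, 2}" by auto
  then have "idx p \<beta> \<gamma> \<alpha> ?Y x3 3 = x3 \<bullet> \<beta> + y2 * \<gamma> 1 + y1 * \<gamma> 2 + init_effect p \<gamma> y0 3 + \<alpha>"
    using idx_path[of 3 p] assms by (simp add: path_def add.assoc)
  ultimately show ?thesis by (simp add: condprob_def)
qed

lemma condexp_weighting_01_eq_0:
  fixes \<beta> x1 x2 :: "real^'k"
  assumes p: "p \<ge> 2"
    and init_23: "init_effect p \<gamma> y0 2 = init_effect p \<gamma> y0 3"
    and m_010: "m 0 1 0 = exp ((x1 - x2) \<bullet> \<beta> + init_effect p \<gamma> y0 1 - init_effect p \<gamma> y0 2)"
    and m_011: "m 0 1 1 = exp ((x1 - x2) \<bullet> \<beta> - \<gamma> 1 + init_effect p \<gamma> y0 1 - init_effect p \<gamma> y0 3)"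
    and m_10: "\<And>y. m 1 0 y = -1"
    and m_same: "\<And>y. m 0 0 y = 0" "\<And>y. m 1 1 y = 0"
  shows "condexp p \<beta> \<gamma> y0 x1 x2 x2 \<alpha> m = 0"
proof -
  define u where "u = x1 \<bullet> \<beta> + init_effect p \<gamma> y0 1 + \<alpha>"
  define v where "v = x2 \<bullet> \<beta> + init_effect p \<gamma> y0 2 + \<alpha>"
  define w where "w = x2 \<bullet> \<beta> + \<gamma> 1 + init_effect p \<gamma> y0 3 + \<alpha>"
  define q where "q = Lam (x2 \<bullet> \<beta> + \<gamma> 2 + init_effect p \<gamma> y0 3 + \<alpha>)"
  have m_01: "m 0 1 0 = exp (u - v)" "m 0 1 1 = exp (u - w)"
    unfolding m_010 m_011 u_def v_def w_def by (simp_all add: inner_diff_left algebra_simps)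
  have prob_01: "condprob p \<beta> \<gamma> y0 x1 x2 x2 \<alpha> 0 1 y = (1 - Lam u) * Lam v * bern (Lam w) y" for y
    by (simp add: condprob_eq[OF p] bern_def u_def v_def w_def add.commute)
  have prob_10: "condprob p \<beta> \<gamma> y0 x1 x2 x2 \<alpha> 1 0 y = Lam u * (1 - Lam w) * bern q y" for y
    using init_23 by (simp add: condprob_eq[OF p] bern_def u_def w_def q_def add.commute)
  have "condexp p \<beta> \<gamma> y0 x1 x2 x2 \<alpha> m
      = exp (u - v) * ((1 - Lam u) * Lam v * (1 - Lam w)) + exp (u - w) * ((1 - Lam u) * Lam v * Lam w)
        - Lam u * (1 - Lam w) * (bern q 0 + bern q 1)"
    by (simp add: condexp_def m_01 m_10 m_same prob_01 prob_10 bern_def algebra_simps)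
  then show ?thesis
    by (simp add: logit_odds_balance_01 bern_sum)
qed

lemma condexp_weighting_10_eq_0:
  fixes \<beta> x1 x2 :: "real^'k"
  assumes p: "p \<ge> 2"
    and init_23: "init_effect p \<gamma> y0 2 = \<gamma> 2 + init_effect p \<gamma> y0 3"
    and m_100: "m 1 0 0 = exp ((x2 - x1) \<bullet> \<beta> + init_effect p \<gamma> y0 2 - init_effect p \<gamma> y0 1)"
    and m_101: "m 1 0 1 = exp ((x2 - x1) \<bullet> \<beta> + \<gamma> 1 + init_effect p \<gamma> y0 2 - init_effect p \<gamma> y0 1)"
    and m_01: "\<And>y. m 0 1 y = -1"
    and m_same: "\<And>y. m 0 0 y = 0" "\<And>y. m 1 1 y = 0"
  shows "condexp p \<beta> \<gamma> y0 x1 x2 x2 \<alpha> m = 0"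
proof -
  define u where "u = x1 \<bullet> \<beta> + init_effect p \<gamma> y0 1 + \<alpha>"
  define v where "v = x2 \<bullet> \<beta> + init_effect p \<gamma> y0 2 + \<alpha>"
  define w where "w = x2 \<bullet> \<beta> + \<gamma> 1 + init_effect p \<gamma> y0 2 + \<alpha>"
  define q where "q = Lam (x2 \<bullet> \<beta> + \<gamma> 1 + init_effect p \<gamma> y0 3 + \<alpha>)"
  have m_10: "m 1 0 0 = exp (v - u)" "m 1 0 1 = exp (w - u)"
    unfolding m_100 m_101 u_def v_def w_def by (simp_all add: inner_diff_left algebra_simps)
  have prob_10: "condprob p \<beta> \<gamma> y0 x1 x2 x2 \<alpha> 1 0 y = Lam u * (1 - Lam w) * bern (Lam v) y" for y
    using init_23 by (simp add: condprob_eq[OF p] bern_def u_def v_def w_def add.commute add.left_commute)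
  have prob_01: "condprob p \<beta> \<gamma> y0 x1 x2 x2 \<alpha> 0 1 y = (1 - Lam u) * Lam v * bern q y" for y
    by (simp add: condprob_eq[OF p] bern_def u_def v_def q_def add.commute)
  have "condexp p \<beta> \<gamma> y0 x1 x2 x2 \<alpha> m
      = exp (v - u) * (Lam u * (1 - Lam w) * (1 - Lam v)) + exp (w - u) * (Lam u * (1 - Lam w) * Lam v)
        - (1 - Lam u) * Lam v * (bern q 0 + bern q 1)"
    by (simp add: condexp_def m_01 m_10 m_same prob_01 prob_10 bern_def algebra_simps)
  then show ?thesis
    by (simp add: logit_odds_balance_10 bern_sum)
qed

lemma init_effect_y0_0p: "init_effect p \<gamma> (y0_0p p) t = 0"
  by (simp add: init_effect_def y0_0p_def)

lemma init_effect_y0_1p: "init_effect p \<gamma> (y0_1p p) t = (\<Sum>l=t..p. \<gamma> l)"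
  by (simp add: init_effect_def y0_1p_def)

lemma init_effect_y0_10:
  assumes "1 \<le> t" "1 \<le> p"
  shows "init_effect p \<gamma> (y0_10 p) t = (if t = 1 then \<gamma> p else 0)"
proof -
  have "init_effect p \<gamma> (y0_10 p) t = (\<Sum>l=t..p. if l = p + t - 1 then \<gamma> l else 0)"
    using assms unfolding init_effect_def y0_10_def by (intro sum.cong) auto
  then show ?thesis
    using assms by (cases "t = 1") auto
qed

lemma init_effect_y0_01:
  assumes "1 \<le> t" "1 \<le> p"
  shows "init_effect p \<gamma> (y0_01 p) t = (\<Sum>l=t..p. \<gamma> l) - (if t = 1 then \<gamma> p else 0)"
proof -
  have "init_effect p \<gamma> (y0_01 p) t = (\<Sum>l=t..p. \<gamma> l) - init_effect p \<gamma> (y0_10 p) t"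
    unfolding init_effect_def sum_subtractf[symmetric]
    by (rule sum.cong) (simp_all add: y0_01_def y0_10_def)
  then show ?thesis
    using init_effect_y0_10[OF assms] by simp
qed

theorem lemma5:
  fixes p :: nat and \<beta>0 x1 x2 :: "real^'k" and \<gamma>0 :: "nat \<Rightarrow> real" and \<alpha> :: real
  assumes "p \<ge> 2"
  shows "condexp p \<beta>0 \<gamma>0 (y0_0p p) x1 x2 x2 \<alpha> (m_0p p x1 x2 \<beta>0 \<gamma>0) = 0
       \<and> condexp p \<beta>0 \<gamma>0 (y0_01 p) x1 x2 x2 \<alpha> (m_01 p x1 x2 \<beta>0 \<gamma>0) = 0
       \<and> condexp p \<beta>0 \<gamma>0 (y0_10 p) x1 x2 x2 \<alpha> (m_10 p x1 x2 \<beta>0 \<gamma>0) = 0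
       \<and> condexp p \<beta>0 \<gamma>0 (y0_1p p) x1 x2 x2 \<alpha> (m_1p p x1 x2 \<beta>0 \<gamma>0) = 0"
proof -
  have sum_1: "(\<Sum>l=1..p. \<gamma>0 l) = \<gamma>0 1 + (\<Sum>l=2..p. \<gamma>0 l)"
    and sum_2: "(\<Sum>l=2..p. \<gamma>0 l) = \<gamma>0 2 + (\<Sum>l=3..p. \<gamma>0 l)"
    using assms by (simp_all add: sum.atLeast_Suc_atMost numeral_eq_Suc)
  have "1 \<le> p" using assms by simp
  note init_effects = init_effect_y0_0p init_effect_y0_1p
    init_effect_y0_10[OF _ \<open>1 \<le> p\<close>] init_effect_y0_01[OF _ \<open>1 \<le> p\<close>]
  show ?thesis
  proof (intro conjI)
    show "condexp p \<beta>0 \<gamma>0 (y0_0p p) x1 x2 x2 \<alpha> (m_0p p x1 x2 \<beta>0 \<gamma>0) = 0"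
      by (rule condexp_weighting_01_eq_0[OF assms]) (simp_all add: init_effects m_0p_def)
    show "condexp p \<beta>0 \<gamma>0 (y0_10 p) x1 x2 x2 \<alpha> (m_10 p x1 x2 \<beta>0 \<gamma>0) = 0"
      by (rule condexp_weighting_01_eq_0[OF assms]) (simp_all add: init_effects m_10_def)
    show "condexp p \<beta>0 \<gamma>0 (y0_01 p) x1 x2 x2 \<alpha> (m_01 p x1 x2 \<beta>0 \<gamma>0) = 0"
      by (rule condexp_weighting_10_eq_0[OF assms]) (use sum_1 sum_2 in \<open>simp_all add: init_effects m_01_def\<close>)
    show "condexp p \<beta>0 \<gamma>0 (y0_1p p) x1 x2 x2 \<alpha> (m_1p p x1 x2 \<beta>0 \<gamma>0) = 0"
      by (rule condexp_weighting_10_eq_0[OF assms]) (use sum_1 sum_2 in \<open>simp_all add: init_effects m_1p_def\<close>)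
  qed
qed

end
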